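(* If $G$ and $H$ are edge transitive graphs, then \[\chi_{vec}(G\times H)=\min\{\chi_{vec}(G),\chi_{vec}(H)\}.\]
   Context: Graphs are finite, simple and undirected. The categorical product $G\times H$ has vertex set $V(G)\times V(H)$, with $(u_1,v_1)\sim(u_2,v_2)$ iff $u_1\sim u_2$ and $v_1\sim v_2$. For a real $k>1$, a vector $k$-coloring of $G$ is a map $\varphi$ from $V(G)$ to the unit sphere of some $\mathbb{R}^d$ with $\varphi(u)^T\varphi(v)\le -\frac{1}{k-1}$ whenever $u\sim v$; the vector chromatic number $\chi_{vec}(G)$ is the smallest such $k$ (equal to $1$ for graphs with no edges). *)

theory Defs
  imports Main "HOL.Real"
begin

definition simple_graph :: "'a set \<Rightarrow> ('a \<Rightarrow> 'a \<Rightarrow> bool) \<Rightarrow> bool" where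
  "simple_graph V E \<longleftrightarrow> finite V \<and> (\<forall>u v. E u v \<longrightarrow> u \<in> V \<and> v \<in> V)
     \<and> (\<forall>u v. E u v \<longrightarrow> E v u) \<and> (\<forall>u. \<not> E u u)"

definition cat_prod_adj :: "('a \<Rightarrow> 'a \<Rightarrow> bool) \<Rightarrow> ('b \<Rightarrow> 'b \<Rightarrow> bool)
    \<Rightarrow> ('a \<times> 'b) \<Rightarrow> ('a \<times> 'b) \<Rightarrow> bool" where
  "cat_prod_adj E F p q \<longleftrightarrow> E (fst p) (fst q) \<and> F (snd p) (snd q)"

definition graph_automorphism :: "'a set \<Rightarrow> ('a \<Rightarrow> 'a \<Rightarrow> bool) \<Rightarrow> ('a \<Rightarrow> 'a) \<Rightarrow> bool" where
  "graph_automorphism V E \<sigma> \<longleftrightarrow> bij_betw \<sigma> V V \<and>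
     (\<forall>u\<in>V. \<forall>v\<in>V. E (\<sigma> u) (\<sigma> v) \<longleftrightarrow> E u v)"

definition edge_transitive :: "'a set \<Rightarrow> ('a \<Rightarrow> 'a \<Rightarrow> bool) \<Rightarrow> bool" where
  "edge_transitive V E \<longleftrightarrow> (\<forall>u v x y. E u v \<longrightarrow> E x y \<longrightarrow>
     (\<exists>\<sigma>. graph_automorphism V E \<sigma> \<and> \<sigma> ` {u, v} = {x, y}))"

text \<open>Vectors of R^d are represented as functions nat \<Rightarrow> real supported on {..<d}.
  A vector k-coloring in dimension d: unit vectors with inner product at most -1/(k-1)
  across every edge.\<close>
definition vector_coloring :: "'a set \<Rightarrow> ('a \<Rightarrow> 'a \<Rightarrow> bool) \<Rightarrow> real \<Rightarrow> nat \<Rightarrow> ('a \<Rightarrow> nat \<Rightarrow> real) \<Rightarrow> bool" where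
  "vector_coloring V E k d \<phi> \<longleftrightarrow>
     (\<forall>u\<in>V. (\<forall>i\<ge>d. \<phi> u i = 0) \<and> (\<Sum>i<d. (\<phi> u i)^2) = 1) \<and>
     (\<forall>u\<in>V. \<forall>v\<in>V. E u v \<longrightarrow> (\<Sum>i<d. \<phi> u i * \<phi> v i) \<le> - 1 / (k - 1))"

definition vector_colorable :: "'a set \<Rightarrow> ('a \<Rightarrow> 'a \<Rightarrow> bool) \<Rightarrow> real \<Rightarrow> bool" where
  "vector_colorable V E k \<longleftrightarrow> k > 1 \<and> (\<exists>d \<phi>. vector_coloring V E k d \<phi>)"

definition chi_vec :: "'a set \<Rightarrow> ('a \<Rightarrow> 'a \<Rightarrow> bool) \<Rightarrow> real" where
  "chi_vec V E = (if \<exists>u\<in>V. \<exists>v\<in>V. E u v then Inf {k. vector_colorable V E k} else 1)"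

end

theory Submission
  imports Defs "HOL-Analysis.Analysis"
begin

text \<open>
  Vector colorings of a factor lift to the product, so only the lower bound needs an argument.
  If a factor is bipartite, both sides are 2 (every graph with an edge needs \<open>k \<ge> 2\<close>).
  Otherwise an edge-transitive graph with an edge is \<open>d\<close>-regular on its non-isolated vertices,
  and averaging an eigenvector of the least adjacency eigenvalue \<open>\<lambda>\<close> over the automorphism
  group yields a vector \<open>(1 - d/\<lambda>)\<close>-coloring. Hoffman's bound
  \<open>\<chi>\<^sub>v\<^sub>e\<^sub>c \<ge> 1 - \<lambda>\<^sub>m\<^sub>a\<^sub>x/\<lambda>\<^sub>m\<^sub>i\<^sub>n\<close> applies to the product, whose adjacency matrix is the
  Kronecker product: there \<open>\<lambda>\<^sub>m\<^sub>a\<^sub>x = d\<^sub>G d\<^sub>H\<close> (tensor of the Perron vectors) and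
  \<open>\<lambda>\<^sub>m\<^sub>i\<^sub>n \<ge> min (\<lambda>\<^sub>H d\<^sub>G) (\<lambda>\<^sub>G d\<^sub>H)\<close> (Kronecker products of psd matrices are psd), which
  gives exactly \<open>min (1 - d\<^sub>G/\<lambda>\<^sub>G) (1 - d\<^sub>H/\<lambda>\<^sub>H)\<close>.
\<close>

section \<open>Quadratic forms and positive semidefinite matrices\<close>

definition quad_form :: "'v set \<Rightarrow> ('v \<Rightarrow> 'v \<Rightarrow> real) \<Rightarrow> ('v \<Rightarrow> real) \<Rightarrow> real" where
  "quad_form S M x = (\<Sum>u\<in>S. \<Sum>v\<in>S. M u v * x u * x v)"

definition sq_norm :: "'v set \<Rightarrow> ('v \<Rightarrow> real) \<Rightarrow> real" where
  "sq_norm S x = (\<Sum>u\<in>S. (x u)\<^sup>2)"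

definition psd_on :: "'v set \<Rightarrow> ('v \<Rightarrow> 'v \<Rightarrow> real) \<Rightarrow> bool" where
  "psd_on S M \<longleftrightarrow> (\<forall>x. 0 \<le> quad_form S M x)"

definition symmetric_on :: "'v set \<Rightarrow> ('v \<Rightarrow> 'v \<Rightarrow> real) \<Rightarrow> bool" where
  "symmetric_on S M \<longleftrightarrow> (\<forall>u\<in>S. \<forall>v\<in>S. M u v = M v u)"

definition id_matrix :: "'v \<Rightarrow> 'v \<Rightarrow> real" where
  "id_matrix u v = (if u = v then 1 else 0)"

lemma symmetric_onD: "symmetric_on S M \<Longrightarrow> u \<in> S \<Longrightarrow> v \<in> S \<Longrightarrow> M u v = M v u"
  by (simp add: symmetric_on_def)

lemma quad_form_cong: "(\<And>u. u \<in> S \<Longrightarrow> x u = y u) \<Longrightarrow> quad_form S M x = quad_form S M y"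
  unfolding quad_form_def by (intro sum.cong) auto

lemma quad_form_cong_matrix:
  "(\<And>u v. u \<in> S \<Longrightarrow> v \<in> S \<Longrightarrow> M u v = N u v) \<Longrightarrow> quad_form S M x = quad_form S N x"
  unfolding quad_form_def by (intro sum.cong) auto

lemma quad_form_eq_sum_row: "quad_form S M x = (\<Sum>u\<in>S. x u * (\<Sum>v\<in>S. M u v * x v))"
  unfolding quad_form_def by (simp add: sum_distrib_left mult_ac)

lemma quad_form_support:
  assumes "finite T" "S \<subseteq> T" "\<And>u. u \<in> T - S \<Longrightarrow> x u = 0"
  shows "quad_form T M x = quad_form S M x"
proof -
  have "(\<Sum>u\<in>T. x u * (\<Sum>v\<in>T. M u v * x v)) = (\<Sum>u\<in>S. x u * (\<Sum>v\<in>T. M u v * x v))"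
    using assms by (intro sum.mono_neutral_right) auto
  also have "\<dots> = (\<Sum>u\<in>S. x u * (\<Sum>v\<in>S. M u v * x v))"
    using assms by (intro sum.cong refl arg_cong[where f="\<lambda>s. _ * s"] sum.mono_neutral_right) auto
  finally show ?thesis by (simp add: quad_form_eq_sum_row)
qed

lemma quad_form_insert:
  assumes "finite S" "w \<notin> S"
  shows "quad_form (insert w S) M x = M w w * x w * x w + x w * (\<Sum>v\<in>S. M w v * x v)
     + x w * (\<Sum>u\<in>S. M u w * x u) + quad_form S M x"
  using assms by (simp add: quad_form_def sum.distrib sum_distrib_left algebra_simps)

lemma quad_form_lin:
  "quad_form S (\<lambda>u v. a * M u v + b * N u v) x = a * quad_form S M x + b * quad_form S N x"
  by (simp add: quad_form_def algebra_simps sum.distrib sum_distrib_left)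

lemma quad_form_scale: "quad_form S M (\<lambda>u. c * x u) = c\<^sup>2 * quad_form S M x"
  by (simp add: quad_form_def sum_distrib_left mult_ac power2_eq_square)

lemma sum_id_matrix:
  assumes "finite S" "u \<in> S" shows "(\<Sum>v\<in>S. id_matrix u v * x v) = x u"
  using assms by (simp add: id_matrix_def if_distrib[of "\<lambda>c. c * _"] cong: if_cong)

lemma quad_form_id_matrix:
  assumes "finite S" shows "quad_form S id_matrix x = sq_norm S x"
  using sum_id_matrix[OF assms] by (simp add: quad_form_eq_sum_row sq_norm_def power2_eq_square)

lemma quad_form_gram:
  assumes "finite S" "\<forall>u\<in>S. \<forall>v\<in>S. M u v = (\<Sum>i<n. c i u * c i v)"
  shows "quad_form S M x = (\<Sum>i<n. (\<Sum>u\<in>S. c i u * x u)\<^sup>2)"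
proof -
  have "quad_form S M x = (\<Sum>u\<in>S. \<Sum>v\<in>S. \<Sum>i<n. c i u * c i v * x u * x v)"
    unfolding quad_form_def using assms(2) by (simp add: sum_distrib_right)
  also have "\<dots> = (\<Sum>i<n. \<Sum>u\<in>S. \<Sum>v\<in>S. c i u * c i v * x u * x v)"
    by (simp only: sum.swap[where B="{..<n}"])
  also have "\<dots> = (\<Sum>i<n. (\<Sum>u\<in>S. c i u * x u)\<^sup>2)"
    by (simp add: power2_eq_square sum_product mult_ac)
  finally show ?thesis .
qed

lemma sq_norm_nonneg: "0 \<le> sq_norm S x"
  by (simp add: sq_norm_def sum_nonneg)

lemma sq_norm_scale: "sq_norm S (\<lambda>u. c * x u) = c\<^sup>2 * sq_norm S x"
  by (simp add: sq_norm_def sum_distrib_left power_mult_distrib)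

lemma sq_norm_eq_0_imp:
  assumes "finite S" "sq_norm S x = 0" "u \<in> S" shows "x u = 0"
  using assms sum_nonneg_eq_0_iff[of S "\<lambda>u. (x u)\<^sup>2"] by (simp add: sq_norm_def)

lemma quad_form_eq_0_if_sq_norm_eq_0:
  assumes "finite S" "sq_norm S x = 0" shows "quad_form S M x = 0"
  using sq_norm_eq_0_imp[OF assms] by (simp add: quad_form_def)

lemma psd_on_subset:
  assumes "finite T" "S \<subseteq> T" "psd_on T M" shows "psd_on S M"
  unfolding psd_on_def
proof
  fix x
  have "quad_form T M (\<lambda>u. if u \<in> S then x u else 0) = quad_form S M (\<lambda>u. if u \<in> S then x u else 0)"
    using assms(1,2) by (intro quad_form_support) auto
  also have "\<dots> = quad_form S M x"
    by (intro quad_form_cong) auto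
  finally have "quad_form S M x = quad_form T M (\<lambda>u. if u \<in> S then x u else 0)" ..
  then show "0 \<le> quad_form S M x" using assms(3) by (simp add: psd_on_def)
qed

lemma psd_on_zero_diagonal:
  assumes "finite S" "psd_on S M" "symmetric_on S M" "w \<in> S" "v \<in> S" "M w w = 0"
  shows "M w v = 0"
proof (rule ccontr)
  assume ne: "M w v \<noteq> 0"
  then have "w \<noteq> v" using assms(6) by auto
  define t where "t = - (M v v + 1) / (2 * M w v)"
  have "0 \<le> quad_form {w, v} M (\<lambda>z. if z = w then t else 1)"
    using psd_on_subset[OF assms(1) _ assms(2)] assms(4,5) by (simp add: psd_on_def)
  also have "\<dots> = 2 * t * M w v + M v v"
    using \<open>w \<noteq> v\<close> assms(3-6) unfolding quad_form_def symmetric_on_def by (simp add: algebra_simps)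
  also have "\<dots> = -1" using ne by (simp add: t_def field_simps)
  finally show False by simp
qed

lemma psd_on_schur_complement:
  assumes "finite S" "w \<notin> S" "psd_on (insert w S) M" "symmetric_on (insert w S) M" "M w w > 0"
  shows "psd_on S (\<lambda>u v. M u v - M u w * M w v / M w w)"
  unfolding psd_on_def
proof
  fix x
  define r where "r = (\<Sum>v\<in>S. M w v * x v)"
  have r': "(\<Sum>u\<in>S. M u w * x u) = r"
    unfolding r_def using symmetric_onD[OF assms(4)] by (intro sum.cong) auto
  define y where "y = x(w := - r / M w w)"
  have "0 \<le> quad_form (insert w S) M y" using assms(3) by (simp add: psd_on_def)
  also have "\<dots> = quad_form S M x - r * r / M w w"
  proof -
    have "(\<Sum>v\<in>S. M w v * y v) = r"
      unfolding r_def y_def using assms(2) by (intro sum.cong) auto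
    moreover have "(\<Sum>u\<in>S. M u w * y u) = r"
      unfolding r'[symmetric] y_def using assms(2) by (intro sum.cong) auto
    moreover have "quad_form S M y = quad_form S M x"
      unfolding y_def using assms(2) by (intro quad_form_cong) auto
    ultimately show ?thesis
      using assms(1,2,5) by (simp add: quad_form_insert) (simp add: y_def field_simps)
  qed
  also have "\<dots> = quad_form S (\<lambda>u v. M u v - M u w * M w v / M w w) x"
  proof -
    have "quad_form S (\<lambda>u v. M u v - M u w * M w v / M w w) x
        = quad_form S M x - (\<Sum>u\<in>S. \<Sum>v\<in>S. (M u w * x u) * (M w v * x v)) / M w w"
      by (simp add: quad_form_def sum_subtractf sum_divide_distrib algebra_simps)
    also have "(\<Sum>u\<in>S. \<Sum>v\<in>S. (M u w * x u) * (M w v * x v)) = r * r"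
      by (simp add: sum_product[symmetric] r' r_def)
    finally show ?thesis by simp
  qed
  finally show "0 \<le> quad_form S (\<lambda>u v. M u v - M u w * M w v / M w w) x" .
qed

lemma psd_on_remove_rank_one:
  assumes "finite S" "w \<notin> S" "psd_on (insert w S) M" "symmetric_on (insert w S) M"
  defines "c \<equiv> \<lambda>u. M u w / sqrt (M w w)"
  shows "psd_on S (\<lambda>u v. M u v - c u * c v)"
    and "\<forall>v\<in>insert w S. M w v - c w * c v = 0 \<and> M v w - c v * c w = 0"
proof -
  note sym = symmetric_onD[OF assms(4)]
  define M' where "M' = (\<lambda>u v. M u v - c u * c v)"
  have "psd_on {w} M"
    by (rule psd_on_subset[of "insert w S"]) (use assms(1,3) in auto)
  then have "0 \<le> quad_form {w} M (\<lambda>_. 1)"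
    by (simp add: psd_on_def)
  then have Mww: "0 \<le> M w w"
    by (simp add: quad_form_def)
  have M'_eq: "M' u v = M u v - M u w * M w v / M w w" if "v \<in> insert w S" for u v
  proof -
    have "sqrt (M w w) * sqrt (M w w) = M w w" using Mww by simp
    then show ?thesis using sym[OF that insertI1] by (simp add: M'_def c_def)
  qed
  have "psd_on S M' \<and> (\<forall>v\<in>insert w S. M' w v = 0 \<and> M' v w = 0)"
  proof (cases "M w w = 0")
    case True
    have row: "M w v = 0 \<and> M v w = 0" if "v \<in> insert w S" for v
      using psd_on_zero_diagonal[OF _ assms(3,4) insertI1 that True] assms(1) sym[OF that insertI1]
      by simp
    have "M' = M"
      using True by (simp add: fun_eq_iff M'_def c_def)
    moreover have "psd_on S M"
      by (rule psd_on_subset[of "insert w S"]) (use assms(1,3) in auto)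
    ultimately show ?thesis
      using row by simp
  next
    case False
    then have "psd_on S (\<lambda>u v. M u v - M u w * M w v / M w w)"
      using Mww psd_on_schur_complement[OF assms(1-4)] by simp
    moreover have "quad_form S M' x = quad_form S (\<lambda>u v. M u v - M u w * M w v / M w w) x" for x
      using M'_eq by (intro quad_form_cong_matrix) simp
    ultimately have "psd_on S M'"
      by (simp add: psd_on_def)
    then show ?thesis
      using False M'_eq M'_eq[OF insertI1] by simp
  qed
  then show "psd_on S (\<lambda>u v. M u v - c u * c v)"
    and "\<forall>v\<in>insert w S. M w v - c w * c v = 0 \<and> M v w - c v * c w = 0"
    by (simp_all add: M'_def)
qed

lemma psd_on_gram:
  assumes "finite S" "symmetric_on S M" "psd_on S M"
  shows "\<exists>(n::nat) c. \<forall>u\<in>S. \<forall>v\<in>S. M u v = (\<Sum>i<n. c i u * c i v)"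
  using assms
proof (induction S arbitrary: M rule: finite_induct)
  case empty
  then show ?case by auto
next
  case (insert w S)
  define c where "c u = M u w / sqrt (M w w)" for u
  define M' where "M' u v = M u v - c u * c v" for u v
  note reduction = psd_on_remove_rank_one[OF insert.hyps insert.prems(2,1)]
  have "psd_on S M'"
    unfolding M'_def[abs_def] c_def by (rule reduction(1))
  moreover have "symmetric_on S M'"
    using symmetric_onD[OF insert.prems(1)] by (simp add: symmetric_on_def M'_def mult.commute)
  ultimately obtain n :: nat and b where b: "\<forall>u\<in>S. \<forall>v\<in>S. M' u v = (\<Sum>i<n. b i u * b i v)"
    using insert.IH by blast
  define b' where "b' i u = (if i < n then (if u = w then 0 else b i u) else c u)" for i u
  have "M u v = (\<Sum>i<Suc n. b' i u * b' i v)" if "u \<in> insert w S" "v \<in> insert w S" for u v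
  proof -
    have "(\<Sum>i<n. b' i u * b' i v) = M' u v"
      using b that reduction(2) by (cases "u = w"; cases "v = w") (auto simp: b'_def M'_def c_def)
    then show ?thesis by (simp add: M'_def b'_def)
  qed
  then show ?case by blast
qed

lemma psd_on_kernel:
  assumes "finite S" "symmetric_on S M" "psd_on S M" "quad_form S M a = 0" "u \<in> S"
  shows "(\<Sum>v\<in>S. M u v * a v) = 0"
proof -
  obtain n :: nat and c where c: "\<forall>u\<in>S. \<forall>v\<in>S. M u v = (\<Sum>i<n. c i u * c i v)"
    using psd_on_gram[OF assms(1-3)] by blast
  have "(\<Sum>i<n. (\<Sum>u\<in>S. c i u * a u)\<^sup>2) = 0"
    using quad_form_gram[OF assms(1) c] assms(4) by simp
  then have "(\<Sum>v\<in>S. c i v * a v) = 0" if "i < n" for i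
    using that by (subst (asm) sum_nonneg_eq_0_iff) auto
  have "(\<Sum>v\<in>S. M u v * a v) = (\<Sum>v\<in>S. \<Sum>i<n. c i u * (c i v * a v))"
    using c assms(5) by (simp add: sum_distrib_right mult.assoc)
  also have "\<dots> = (\<Sum>i<n. c i u * (\<Sum>v\<in>S. c i v * a v))"
    by (simp only: sum.swap[where B="{..<n}"] sum_distrib_left)
  also have "\<dots> = 0"
    using \<open>\<And>i. i < n \<Longrightarrow> (\<Sum>v\<in>S. c i v * a v) = 0\<close> by simp
  finally show ?thesis .
qed

section \<open>Kronecker products\<close>

definition kron :: "('a \<Rightarrow> 'a \<Rightarrow> real) \<Rightarrow> ('b \<Rightarrow> 'b \<Rightarrow> real) \<Rightarrow> 'a \<times> 'b \<Rightarrow> 'a \<times> 'b \<Rightarrow> real" where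
  "kron M N p q = M (fst p) (fst q) * N (snd p) (snd q)"

lemma sum_Times: "(\<Sum>p\<in>S \<times> T. f p) = (\<Sum>u\<in>S. \<Sum>v\<in>T. f (u, v))"
  by (simp add: sum.cartesian_product)

lemma quad_form_kron:
  "quad_form (S \<times> T) (kron M N) y
     = (\<Sum>u\<in>S. \<Sum>v\<in>T. \<Sum>u'\<in>S. \<Sum>v'\<in>T. M u u' * N v v' * y (u, v) * y (u', v'))"
  unfolding quad_form_def sum_Times kron_def by simp

lemma quad_form_row_sums:
  "quad_form S M (\<lambda>u. \<Sum>v\<in>T. z u v)
     = (\<Sum>u\<in>S. \<Sum>v\<in>T. \<Sum>u'\<in>S. \<Sum>v'\<in>T. M u u' * z u v * z u' v')"
proof -
  have "M u u' * (\<Sum>v\<in>T. z u v) * (\<Sum>v'\<in>T. z u' v') = (\<Sum>v\<in>T. \<Sum>v'\<in>T. M u u' * z u v * z u' v')"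
    for u u' by (simp only: sum_distrib_left[symmetric] sum_distrib_right[symmetric] mult.assoc)
  then have "quad_form S M (\<lambda>u. \<Sum>v\<in>T. z u v)
      = (\<Sum>u\<in>S. \<Sum>u'\<in>S. \<Sum>v\<in>T. \<Sum>v'\<in>T. M u u' * z u v * z u' v')"
    unfolding quad_form_def by simp
  also have "\<dots> = (\<Sum>u\<in>S. \<Sum>v\<in>T. \<Sum>u'\<in>S. \<Sum>v'\<in>T. M u u' * z u v * z u' v')"
    by (rule sum.cong[OF refl], rule sum.swap)
  finally show ?thesis .
qed

lemma psd_on_kron:
  assumes "finite S" "finite T" "psd_on S M" "symmetric_on T N" "psd_on T N"
  shows "psd_on (S \<times> T) (kron M N)"
  unfolding psd_on_def
proof
  fix y
  obtain n :: nat and c where c: "\<forall>v\<in>T. \<forall>v'\<in>T. N v v' = (\<Sum>i<n. c i v * c i v')"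
    using psd_on_gram[OF assms(2,4,5)] by blast
  have "quad_form (S \<times> T) (kron M N) y
      = (\<Sum>i<n. quad_form S M (\<lambda>u. \<Sum>v\<in>T. c i v * y (u, v)))"
  proof -
    have "quad_form (S \<times> T) (kron M N) y = (\<Sum>u\<in>S. \<Sum>v\<in>T. \<Sum>u'\<in>S. \<Sum>v'\<in>T.
        \<Sum>i<n. M u u' * (c i v * y (u, v)) * (c i v' * y (u', v')))"
      unfolding quad_form_kron using c by (simp add: sum_distrib_left sum_distrib_right mult_ac)
    also have "\<dots> = (\<Sum>i<n. \<Sum>u\<in>S. \<Sum>v\<in>T. \<Sum>u'\<in>S. \<Sum>v'\<in>T.
        M u u' * (c i v * y (u, v)) * (c i v' * y (u', v')))"
      by (simp only: sum.swap[where B="{..<n}"])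
    finally show ?thesis
      by (simp only: quad_form_row_sums)
  qed
  also have "\<dots> \<ge> 0"
    using assms(3) by (intro sum_nonneg) (auto simp: psd_on_def)
  finally show "0 \<le> quad_form (S \<times> T) (kron M N) y" .
qed

lemma kron_lin_left:
  "kron (\<lambda>u v. a * M1 u v + b * M2 u v) N = (\<lambda>p q. a * kron M1 N p q + b * kron M2 N p q)"
  by (simp add: kron_def fun_eq_iff algebra_simps)

lemma kron_lin_right:
  "kron M (\<lambda>u v. a * N1 u v + b * N2 u v) = (\<lambda>p q. a * kron M N1 p q + b * kron M N2 p q)"
  by (simp add: kron_def fun_eq_iff algebra_simps)

lemma kron_id_matrix: "kron id_matrix id_matrix = id_matrix"
  by (auto simp: kron_def id_matrix_def fun_eq_iff prod_eq_iff)

lemma quad_form_kron_id_left: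
  assumes "finite S"
  shows "quad_form (S \<times> T) (kron id_matrix N) y = (\<Sum>u\<in>S. quad_form T N (\<lambda>v. y (u, v)))"
proof -
  have "quad_form (S \<times> T) (kron id_matrix N) y
      = (\<Sum>u\<in>S. \<Sum>u'\<in>S. id_matrix u u' * (\<Sum>v\<in>T. \<Sum>v'\<in>T. N v v' * y (u, v) * y (u', v')))"
    unfolding quad_form_kron
    by (rule sum.cong[OF refl], subst sum.swap) (simp add: sum_distrib_left mult_ac)
  also have "\<dots> = (\<Sum>u\<in>S. quad_form T N (\<lambda>v. y (u, v)))"
    using sum_id_matrix[OF assms] by (simp add: quad_form_def)
  finally show ?thesis .
qed

lemma sq_norm_Times: "sq_norm (S \<times> T) y = (\<Sum>u\<in>S. sq_norm T (\<lambda>v. y (u, v)))"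
  by (simp add: sq_norm_def sum_Times)

lemma quad_form_kron_tensor:
  "quad_form (S \<times> T) (kron M N) (\<lambda>p. x (fst p) * y (snd p)) = quad_form S M x * quad_form T N y"
proof -
  have "quad_form S M x * quad_form T N y = (\<Sum>u\<in>S. \<Sum>u'\<in>S. M u u' * x u * x u' * quad_form T N y)"
    unfolding quad_form_def[of S] by (simp add: sum_distrib_right)
  also have "\<dots> = (\<Sum>u\<in>S. \<Sum>u'\<in>S. \<Sum>v\<in>T. \<Sum>v'\<in>T. M u u' * x u * x u' * (N v v' * y v * y v'))"
    unfolding quad_form_def[of T] by (simp add: sum_distrib_left)
  also have "\<dots> = (\<Sum>u\<in>S. \<Sum>v\<in>T. \<Sum>u'\<in>S. \<Sum>v'\<in>T. M u u' * x u * x u' * (N v v' * y v * y v'))"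
    by (rule sum.cong[OF refl], rule sum.swap)
  finally show ?thesis
    by (simp add: quad_form_kron mult_ac)
qed

lemma sq_norm_tensor:
  "sq_norm (S \<times> T) (\<lambda>p. x (fst p) * y (snd p)) = sq_norm S x * sq_norm T y"
  by (simp add: sq_norm_def sum_Times sum_product power_mult_distrib)

section \<open>Rayleigh quotients\<close>

lemma exists_min_quad_form_unit_sphere:
  assumes "finite S" "S \<noteq> {}"
  shows "\<exists>a. sq_norm S a = 1 \<and> (\<forall>y. sq_norm S y = 1 \<longrightarrow> quad_form S M a \<le> quad_form S M y)"
proof -
  let ?X = "product_topology (\<lambda>_. euclideanreal) S"
  define K where "K = {x \<in> S \<rightarrow>\<^sub>E UNIV. sq_norm S x = 1}"
  have cont_sq_norm: "continuous_map ?X euclideanreal (sq_norm S)"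
    unfolding sq_norm_def by (intro continuous_intros) (use assms(1) in auto)
  have "closedin ?X K"
    using closedin_continuous_map_preimage[OF cont_sq_norm, of "{1}"] by (simp add: K_def)
  moreover have "compactin ?X (S \<rightarrow>\<^sub>E cball 0 1)"
    by (simp add: compactin_PiE)
  moreover have "K \<subseteq> S \<rightarrow>\<^sub>E cball 0 1"
  proof
    fix x assume x: "x \<in> K"
    have "\<bar>x u\<bar> \<le> 1" if "u \<in> S" for u
    proof -
      have "(x u)\<^sup>2 \<le> sq_norm S x"
        unfolding sq_norm_def using assms(1) that by (intro member_le_sum) auto
      then show ?thesis using x by (simp add: K_def abs_square_le_1)
    qed
    then show "x \<in> S \<rightarrow>\<^sub>E cball 0 1" using x by (auto simp: K_def)
  qed
  ultimately have "compactin ?X K"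
    using closed_compactin by blast
  moreover have "continuous_map ?X euclideanreal (quad_form S M)"
    unfolding quad_form_def by (intro continuous_intros) (use assms(1) in auto)
  ultimately have "compact (quad_form S M ` K)"
    using image_compactin by fastforce
  moreover obtain u0 where "u0 \<in> S" using assms(2) by blast
  then have "(\<lambda>u\<in>S. if u = u0 then 1 else 0) \<in> K"
    using assms(1) by (simp add: K_def sq_norm_def if_distrib[of "\<lambda>c. c\<^sup>2"] cong: if_cong)
  ultimately obtain a where a: "a \<in> K" and min: "\<And>y. y \<in> K \<Longrightarrow> quad_form S M a \<le> quad_form S M y"
    using compact_attains_inf[of "quad_form S M ` K"] by blast
  have "quad_form S M a \<le> quad_form S M y" if "sq_norm S y = 1" for y
  proof -
    have "restrict y S \<in> K" using that by (simp add: K_def sq_norm_def)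
    moreover have "quad_form S M (restrict y S) = quad_form S M y"
      by (rule quad_form_cong) simp
    ultimately show ?thesis using min by metis
  qed
  then show ?thesis using a by (auto simp: K_def)
qed

lemma exists_min_rayleigh:
  assumes "finite S" "S \<noteq> {}"
  shows "\<exists>a. sq_norm S a = 1 \<and> (\<forall>x. quad_form S M a * sq_norm S x \<le> quad_form S M x)"
proof -
  obtain a where a: "sq_norm S a = 1"
    and min: "\<And>y. sq_norm S y = 1 \<Longrightarrow> quad_form S M a \<le> quad_form S M y"
    using exists_min_quad_form_unit_sphere[OF assms] by blast
  have "quad_form S M a * sq_norm S x \<le> quad_form S M x" for x
  proof (cases "sq_norm S x = 0")
    case True
    then show ?thesis using quad_form_eq_0_if_sq_norm_eq_0[OF assms(1) True] by simp
  next
    case False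
    then have pos: "0 < sq_norm S x" using sq_norm_nonneg[of S x] by simp
    define t where "t = inverse (sqrt (sq_norm S x))"
    have t2: "t\<^sup>2 * sq_norm S x = 1" using pos by (simp add: t_def power_inverse)
    then have "quad_form S M a \<le> t\<^sup>2 * quad_form S M x"
      using min[of "\<lambda>u. t * x u"] by (simp add: sq_norm_scale quad_form_scale)
    then have "quad_form S M a * sq_norm S x \<le> t\<^sup>2 * sq_norm S x * quad_form S M x"
      using pos by (simp add: mult_right_mono mult.commute mult.left_commute)
    then show ?thesis using t2 by simp
  qed
  then show ?thesis using a by blast
qed

lemma min_rayleigh_eigenvector:
  assumes "finite S" "symmetric_on S M" "sq_norm S a = 1"
    and min: "\<forall>x. quad_form S M a * sq_norm S x \<le> quad_form S M x" and "u \<in> S"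
  shows "(\<Sum>v\<in>S. M u v * a v) = quad_form S M a * a u"
proof -
  define lam where "lam = quad_form S M a"
  define M0 where "M0 = (\<lambda>u v. 1 * M u v + (- lam) * id_matrix u v)"
  have M0: "quad_form S M0 x = quad_form S M x - lam * sq_norm S x" for x
    unfolding M0_def quad_form_lin quad_form_id_matrix[OF assms(1)] by simp
  have "psd_on S M0"
    using min by (simp add: psd_on_def M0 lam_def)
  moreover have "symmetric_on S M0"
    using symmetric_onD[OF assms(2)] by (simp add: symmetric_on_def M0_def id_matrix_def)
  moreover have "quad_form S M0 a = 0"
    using assms(3) by (simp add: M0 lam_def)
  ultimately have "(\<Sum>v\<in>S. M0 u v * a v) = 0"
    using psd_on_kernel[OF assms(1)] assms(5) by blast
  moreover have "(\<Sum>v\<in>S. M0 u v * a v) = (\<Sum>v\<in>S. M u v * a v) - lam * (\<Sum>v\<in>S. id_matrix u v * a v)"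
    by (simp add: M0_def sum_subtractf sum_distrib_left algebra_simps)
  ultimately show ?thesis
    using sum_id_matrix[OF assms(1,5)] by (simp add: lam_def)
qed

definition rayleigh_bounds :: "'v set \<Rightarrow> ('v \<Rightarrow> 'v \<Rightarrow> real) \<Rightarrow> real \<Rightarrow> real \<Rightarrow> bool" where
  "rayleigh_bounds S M lo hi \<longleftrightarrow>
     (\<forall>x. lo * sq_norm S x \<le> quad_form S M x \<and> quad_form S M x \<le> hi * sq_norm S x)"

text \<open>Eliminate \<open>a\<close> by the combination \<open>dH \<cdot> (first) - sH \<cdot> (second)\<close>, then bound \<open>b\<close> on the
  side given by the sign of its coefficient.\<close>
lemma kron_bounds_elimination:
  fixes p a b n sG dG sH dH :: real
  assumes T1: "0 \<le> p - sH * a - sG * b + sG * sH * n"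
    and T2: "0 \<le> p - dH * a - dG * b + dG * dH * n"
    and b: "sH * n \<le> b" "b \<le> dH * n" and "0 \<le> n" "sH \<le> 0" "0 < dH"
  shows "min (sH * dG) (sG * dH) * n \<le> p"
proof -
  define beta where "beta = sG * dH - sH * dG"
  have "0 \<le> dH * (p - sH * a - sG * b + sG * sH * n)"
    using T1 \<open>0 < dH\<close> by simp
  moreover have "0 \<le> (- sH) * (p - dH * a - dG * b + dG * dH * n)"
    using T2 \<open>sH \<le> 0\<close> by (intro mult_nonneg_nonneg) auto
  moreover have "dH * (p - sH * a - sG * b + sG * sH * n) + (- sH) * (p - dH * a - dG * b + dG * dH * n)
      = (dH - sH) * p - (beta * b + sH * dH * (dG - sG) * n)"
    by (simp add: beta_def algebra_simps)
  ultimately have key: "beta * b + sH * dH * (dG - sG) * n \<le> (dH - sH) * p"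
    by linarith
  have "0 < dH - sH" using assms(6,7) by simp
  show ?thesis
  proof (cases "0 \<le> beta")
    case True
    have "beta * (sH * n) \<le> beta * b"
      using b(1) True by (rule mult_left_mono)
    then have "(dH - sH) * (sH * dG * n) \<le> (dH - sH) * p"
      using key by (simp add: beta_def algebra_simps)
    then have "sH * dG * n \<le> p"
      using \<open>0 < dH - sH\<close> by simp
    moreover have "min (sH * dG) (sG * dH) * n \<le> sH * dG * n"
      using \<open>0 \<le> n\<close> by (intro mult_right_mono) auto
    ultimately show ?thesis by simp
  next
    case False
    have "beta * (dH * n) \<le> beta * b"
      using b(2) False by (intro mult_left_mono_neg) auto
    then have "(dH - sH) * (sG * dH * n) \<le> (dH - sH) * p"
      using key by (simp add: beta_def algebra_simps)
    then have "sG * dH * n \<le> p"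
      using \<open>0 < dH - sH\<close> by simp
    moreover have "min (sH * dG) (sG * dH) * n \<le> sG * dH * n"
      using \<open>0 \<le> n\<close> by (intro mult_right_mono) auto
    ultimately show ?thesis by simp
  qed
qed

text \<open>The Kronecker products of the psd matrices \<open>A - sG I\<close>, \<open>B - sH I\<close> and of \<open>dG I - A\<close>,
  \<open>dH I - B\<close> give the two inequalities to which the elimination above applies.\<close>
lemma rayleigh_bounds_kron_lower:
  assumes "finite V" "finite W" "symmetric_on W B"
    and A: "rayleigh_bounds V A sG dG" and B: "rayleigh_bounds W B sH dH"
    and "sH \<le> 0" "0 < dH"
  shows "min (sH * dG) (sG * dH) * sq_norm (V \<times> W) y \<le> quad_form (V \<times> W) (kron A B) y"
proof -
  define p where "p = quad_form (V \<times> W) (kron A B) y"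
  define a where "a = quad_form (V \<times> W) (kron A id_matrix) y"
  define b where "b = quad_form (V \<times> W) (kron id_matrix B) y"
  define n where "n = sq_norm (V \<times> W) y"
  have fin: "finite (V \<times> W)" using assms(1,2) by simp
  have psd_of: "psd_on V (\<lambda>u v. s * A u v + t * id_matrix u v)"
    if "\<forall>x. 0 \<le> s * quad_form V A x + t * sq_norm V x" for s t
    using that by (simp add: psd_on_def quad_form_lin quad_form_id_matrix[OF assms(1)])
  have psd_of': "psd_on W (\<lambda>u v. s * B u v + t * id_matrix u v)"
    if "\<forall>x. 0 \<le> s * quad_form W B x + t * sq_norm W x" for s t
    using that by (simp add: psd_on_def quad_form_lin quad_form_id_matrix[OF assms(2)])
  have sym_of: "symmetric_on W (\<lambda>u v. s * B u v + t * id_matrix u v)" for s t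
    using symmetric_onD[OF assms(3)] by (simp add: symmetric_on_def id_matrix_def)
  have expand: "quad_form (V \<times> W) (kron (\<lambda>u v. s * A u v + t * id_matrix u v)
      (\<lambda>u v. s' * B u v + t' * id_matrix u v)) y = s * s' * p + s * t' * a + t * s' * b + t * t' * n"
    for s t s' t'
    unfolding kron_lin_left kron_lin_right quad_form_lin
    by (simp add: kron_id_matrix quad_form_id_matrix[OF fin] p_def a_def b_def n_def algebra_simps)
  have "psd_on (V \<times> W) (kron (\<lambda>u v. 1 * A u v + - sG * id_matrix u v)
      (\<lambda>u v. 1 * B u v + - sH * id_matrix u v))"
    by (rule psd_on_kron[OF assms(1,2) psd_of sym_of psd_of'])
      (use A B in \<open>simp_all add: rayleigh_bounds_def\<close>)
  then have "0 \<le> quad_form (V \<times> W) (kron (\<lambda>u v. 1 * A u v + - sG * id_matrix u v)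
      (\<lambda>u v. 1 * B u v + - sH * id_matrix u v)) y"
    unfolding psd_on_def by blast
  then have T1: "0 \<le> p - sH * a - sG * b + sG * sH * n"
    unfolding expand by simp
  have "psd_on (V \<times> W) (kron (\<lambda>u v. - 1 * A u v + dG * id_matrix u v)
      (\<lambda>u v. - 1 * B u v + dH * id_matrix u v))"
    by (rule psd_on_kron[OF assms(1,2) psd_of sym_of psd_of'])
      (use A B in \<open>simp_all add: rayleigh_bounds_def\<close>)
  then have "0 \<le> quad_form (V \<times> W) (kron (\<lambda>u v. - 1 * A u v + dG * id_matrix u v)
      (\<lambda>u v. - 1 * B u v + dH * id_matrix u v)) y"
    unfolding psd_on_def by blast
  then have T2: "0 \<le> p - dH * a - dG * b + dG * dH * n"
    unfolding expand by simp
  moreover have "sH * n \<le> b" "b \<le> dH * n"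
    using B unfolding b_def n_def quad_form_kron_id_left[OF assms(1)] sq_norm_Times
      sum_distrib_left rayleigh_bounds_def by (auto intro!: sum_mono)
  moreover have "0 \<le> n" by (simp add: n_def sq_norm_nonneg)
  ultimately show ?thesis
    using kron_bounds_elimination[OF T1] assms(6,7) by (simp add: p_def n_def)
qed

section \<open>Adjacency matrices and vector colorings\<close>

lemma simple_graphD:
  assumes "simple_graph V E"
  shows "finite V" "E u v \<Longrightarrow> u \<in> V" "E u v \<Longrightarrow> v \<in> V" "E u v \<Longrightarrow> E v u" "\<not> E u u"
  using assms by (auto simp: simple_graph_def)

definition adj_matrix :: "('v \<Rightarrow> 'v \<Rightarrow> bool) \<Rightarrow> 'v \<Rightarrow> 'v \<Rightarrow> real" where
  "adj_matrix E u v = (if E u v then 1 else 0)"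

lemma adj_matrix_cat_prod: "adj_matrix (cat_prod_adj E F) = kron (adj_matrix E) (adj_matrix F)"
  by (auto simp: adj_matrix_def cat_prod_adj_def kron_def fun_eq_iff)

lemma sum_adj_matrix:
  assumes "finite S" shows "(\<Sum>v\<in>S. adj_matrix E u v) = real (card {v\<in>S. E u v})"
  using assms by (simp add: adj_matrix_def sum.inter_filter[symmetric])

lemma symmetric_on_adj_matrix:
  "simple_graph V E \<Longrightarrow> symmetric_on S (adj_matrix E)"
  by (auto simp: symmetric_on_def adj_matrix_def dest: simple_graphD(4))

lemma adj_matrix_rayleigh_lower_neg:
  assumes "simple_graph V E" "E u0 v0"
    and lam: "\<forall>x. lam * sq_norm V x \<le> quad_form V (adj_matrix E) x"
  shows "lam < 0"
proof -
  note G = simple_graphD[OF assms(1)]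
  have "u0 \<noteq> v0" "{u0, v0} \<subseteq> V" using assms(2) G(2,3,5) by auto
  define x where "x z = (if z = u0 then 1 else if z = v0 then -1 else (0::real))" for z
  have supp: "quad_form V M x = quad_form {u0, v0} M x" for M
    using G(1) \<open>{u0, v0} \<subseteq> V\<close> by (intro quad_form_support) (auto simp: x_def)
  have "quad_form V (adj_matrix E) x = -2"
    unfolding supp using \<open>u0 \<noteq> v0\<close> assms(2) G(4)[of u0 v0] G(5)[of u0] G(5)[of v0]
    by (simp add: quad_form_def adj_matrix_def x_def)
  moreover have "sq_norm V x = 2"
    unfolding quad_form_id_matrix[OF G(1), symmetric] supp using \<open>u0 \<noteq> v0\<close>
    by (simp add: quad_form_def id_matrix_def x_def)
  ultimately show ?thesis using lam[rule_format, of x] by simp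
qed

lemma quad_form_adj_matrix_le_max_degree:
  assumes "simple_graph V E" and deg: "\<forall>u\<in>V. card {v\<in>V. E u v} \<le> D"
  shows "quad_form V (adj_matrix E) x \<le> D * sq_norm V x"
proof -
  let ?A = "adj_matrix E"
  have fin: "finite V" by (rule simple_graphD(1)[OF assms(1)])
  have "quad_form V ?A x \<le> (\<Sum>u\<in>V. \<Sum>v\<in>V. ?A u v * ((x u)\<^sup>2 + (x v)\<^sup>2) / 2)"
    unfolding quad_form_def
  proof (intro sum_mono)
    fix u v
    have "x u * x v \<le> ((x u)\<^sup>2 + (x v)\<^sup>2) / 2"
      using sum_squares_bound[of "x u" "x v"] by (simp add: power2_eq_square)
    then show "?A u v * x u * x v \<le> ?A u v * ((x u)\<^sup>2 + (x v)\<^sup>2) / 2"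
      by (simp add: adj_matrix_def)
  qed
  also have "\<dots> = (\<Sum>u\<in>V. \<Sum>v\<in>V. ?A u v * (x u)\<^sup>2)"
  proof -
    have "(\<Sum>u\<in>V. \<Sum>v\<in>V. ?A u v * (x v)\<^sup>2) = (\<Sum>u\<in>V. \<Sum>v\<in>V. ?A u v * (x u)\<^sup>2)"
      using symmetric_onD[OF symmetric_on_adj_matrix[OF assms(1)]]
      by (subst sum.swap) (auto intro!: sum.cong)
    then show ?thesis
      by (simp add: distrib_left add_divide_distrib sum.distrib sum_divide_distrib[symmetric])
  qed
  also have "\<dots> = (\<Sum>u\<in>V. real (card {v\<in>V. E u v}) * (x u)\<^sup>2)"
    by (simp add: sum_distrib_right[symmetric] sum_adj_matrix[OF fin])
  also have "\<dots> \<le> (\<Sum>u\<in>V. D * (x u)\<^sup>2)"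
    using deg by (intro sum_mono mult_right_mono) auto
  finally show ?thesis by (simp add: sq_norm_def sum_distrib_left)
qed

lemma regular_degree_pos:
  assumes "simple_graph V E" "\<forall>u\<in>V. (\<exists>v. E u v) \<longrightarrow> card {v\<in>V. E u v} = d" "E u0 v0"
  shows "0 < d"
proof -
  note G = simple_graphD[OF assms(1)]
  have "card {v\<in>V. E u0 v} = d" using assms(2) G(2)[OF assms(3)] assms(3) by blast
  moreover have "v0 \<in> {v\<in>V. E u0 v}" using assms(3) G(3) by simp
  ultimately show ?thesis
    using G(1) card_gt_0_iff by fastforce
qed

lemma regular_quad_form_indicator:
  assumes "simple_graph V E" and reg: "\<forall>u\<in>V. (\<exists>v. E u v) \<longrightarrow> card {v\<in>V. E u v} = d"
  defines "x \<equiv> \<lambda>u. if \<exists>v. E u v then 1 else 0 :: real"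
  shows "quad_form V (adj_matrix E) x = real d * sq_norm V x"
proof -
  note G = simple_graphD[OF assms(1)]
  have "x u * (\<Sum>v\<in>V. adj_matrix E u v * x v) = real d * (x u)\<^sup>2" if "u \<in> V" for u
  proof (cases "\<exists>v. E u v")
    case True
    have "(\<Sum>v\<in>V. adj_matrix E u v * x v) = (\<Sum>v\<in>V. adj_matrix E u v)"
      by (intro sum.cong refl) (auto simp: adj_matrix_def x_def dest: G(4))
    then show ?thesis
      using reg that True by (simp add: x_def sum_adj_matrix[OF G(1)])
  qed (auto simp: x_def)
  then show ?thesis
    by (simp add: quad_form_eq_sum_row sq_norm_def sum_distrib_left)
qed

text \<open>Hoffman's bound for vector colorings: with \<open>\<phi>\<close> a vector \<open>k\<close>-coloring, the matrix
  \<open>(x\<^sub>u x\<^sub>v \<langle>\<phi> u, \<phi> v\<rangle>)\<close> is entrywise at most \<open>-1/(k-1)\<close> times the weighted adjacency matrix,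
  while its pairing with the adjacency matrix is a sum of quadratic forms of the vectors
  \<open>u \<mapsto> x\<^sub>u \<phi>\<^sub>i(u)\<close>, each bounded below by \<open>lam\<close>.\<close>
lemma vector_coloring_quad_form_le:
  assumes "finite S" and col: "vector_coloring S E k d \<phi>" and "k > 1"
    and lam: "\<forall>y. lam * sq_norm S y \<le> quad_form S (adj_matrix E) y"
    and nonneg: "\<forall>u\<in>S. 0 \<le> x u"
  shows "quad_form S (adj_matrix E) x \<le> (k - 1) * (- lam) * sq_norm S x"
proof -
  let ?A = "adj_matrix E"
  define L where "L = (\<Sum>i<d. quad_form S ?A (\<lambda>u. x u * \<phi> u i))"
  have "L = (\<Sum>u\<in>S. \<Sum>v\<in>S. ?A u v * x u * x v * (\<Sum>i<d. \<phi> u i * \<phi> v i))"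
    unfolding L_def quad_form_def
    by (simp only: sum.swap[where A="{..<d}"]) (simp add: sum_distrib_left mult_ac)
  also have "\<dots> \<le> (\<Sum>u\<in>S. \<Sum>v\<in>S. ?A u v * x u * x v * (- 1 / (k - 1)))"
  proof (intro sum_mono)
    fix u v assume uv: "u \<in> S" "v \<in> S"
    have "x u * x v * (\<Sum>i<d. \<phi> u i * \<phi> v i) \<le> x u * x v * (- 1 / (k - 1))" if "E u v"
      using col nonneg uv that by (intro mult_left_mono) (auto simp: vector_coloring_def)
    then show "?A u v * x u * x v * (\<Sum>i<d. \<phi> u i * \<phi> v i) \<le> ?A u v * x u * x v * (- 1 / (k - 1))"
      by (simp add: adj_matrix_def)
  qed
  also have "\<dots> = - quad_form S ?A x / (k - 1)"
    by (simp add: quad_form_def sum_divide_distrib sum_negf)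
  finally have upper: "L \<le> - quad_form S ?A x / (k - 1)" .
  have "(\<Sum>i<d. sq_norm S (\<lambda>u. x u * \<phi> u i)) = (\<Sum>u\<in>S. (x u)\<^sup>2 * (\<Sum>i<d. (\<phi> u i)\<^sup>2))"
    unfolding sq_norm_def by (simp add: sum.swap[where A="{..<d}"] sum_distrib_left power_mult_distrib)
  also have "\<dots> = sq_norm S x"
    using col by (simp add: sq_norm_def vector_coloring_def)
  finally have "lam * sq_norm S x \<le> L"
    unfolding L_def using lam by (metis (no_types, lifting) sum_distrib_left sum_mono)
  with upper have "(k - 1) * (lam * sq_norm S x) \<le> (k - 1) * (- quad_form S ?A x / (k - 1))"
    using \<open>k > 1\<close> by (intro mult_left_mono) auto
  also have "\<dots> = - quad_form S ?A x"
    using \<open>k > 1\<close> by simp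
  finally show ?thesis
    by (simp add: algebra_simps)
qed

definition bipartite :: "('a \<Rightarrow> 'a \<Rightarrow> bool) \<Rightarrow> bool" where
  "bipartite E \<longleftrightarrow> (\<exists>s :: 'a \<Rightarrow> bool. \<forall>u v. E u v \<longrightarrow> s u \<noteq> s v)"

lemma bipartite_vector_colorable:
  assumes "bipartite E" shows "vector_colorable V E 2"
proof -
  obtain s :: "'a \<Rightarrow> bool" where s: "\<forall>u v. E u v \<longrightarrow> s u \<noteq> s v"
    using assms unfolding bipartite_def by blast
  define \<phi> where "\<phi> u i = (if i = 0 then (if s u then 1 else -1) else 0 :: real)" for u and i :: nat
  have "vector_coloring V E 2 1 \<phi>"
    unfolding vector_coloring_def
  proof (intro conjI ballI impI allI)
    fix u v assume "E u v"
    then show "(\<Sum>i<1. \<phi> u i * \<phi> v i) \<le> - 1 / (2 - 1)"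
      using s by (cases "s u") (auto simp: \<phi>_def)
  qed (auto simp: \<phi>_def)
  then show ?thesis by (auto simp: vector_colorable_def)
qed

lemma vector_colorable_ge_2:
  assumes "vector_colorable V E k" "u \<in> V" "v \<in> V" "E u v"
  shows "2 \<le> k"
proof -
  obtain d \<phi> where col: "vector_coloring V E k d \<phi>" and "k > 1"
    using assms(1) by (auto simp: vector_colorable_def)
  have "0 \<le> (\<Sum>i<d. (\<phi> u i + \<phi> v i)\<^sup>2)" by (intro sum_nonneg) auto
  also have "\<dots> = 2 + 2 * (\<Sum>i<d. \<phi> u i * \<phi> v i)"
    using col assms(2,3)
    by (simp add: vector_coloring_def power2_sum sum.distrib sum_distrib_left mult.assoc)
  also have "\<dots> \<le> 2 + 2 * (- 1 / (k - 1))"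
    using col assms(2-4) unfolding vector_coloring_def by (intro add_left_mono mult_left_mono) auto
  finally show ?thesis using \<open>k > 1\<close> by (simp add: field_simps)
qed

lemma vector_colorable_of_gram:
  assumes "simple_graph V E" "finite I" "k > 1" "0 < \<mu>"
    and diag: "\<And>u. u \<in> V \<Longrightarrow> (\<exists>v. E u v) \<Longrightarrow> (\<Sum>i\<in>I. g i u * g i u) = \<mu>"
    and edge: "\<And>u v. E u v \<Longrightarrow> (\<Sum>i\<in>I. g i u * g i v) \<le> - \<mu> / (k - 1)"
  shows "vector_colorable V E k"
proof -
  obtain e where e: "bij_betw e {..<card I} I"
    using ex_bij_betw_nat_finite[OF assms(2)] by (auto simp: atLeast0LessThan)
  define m where "m = card I"
  have gram: "(\<Sum>i<m. g (e i) u * g (e i) v) = (\<Sum>i\<in>I. g i u * g i v)" for u v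
    using sum.reindex_bij_betw[OF e] by (simp add: m_def)
  text \<open>Isolated vertices all get the extra unit vector in coordinate \<open>m\<close>.\<close>
  define \<phi> where "\<phi> u i = (if \<exists>v. E u v then (if i < m then g (e i) u / sqrt \<mu> else 0)
      else (if i = m then 1 else 0))" for u i
  have sq: "sqrt \<mu> * sqrt \<mu> = \<mu>" using assms(4) by simp
  have "(\<Sum>i<Suc m. (\<phi> u i)\<^sup>2) = 1" if "u \<in> V" for u
  proof (cases "\<exists>v. E u v")
    case True
    then have "(\<Sum>i<Suc m. (\<phi> u i)\<^sup>2) = (\<Sum>i<m. g (e i) u * g (e i) u) / \<mu>"
      using sq by (simp add: \<phi>_def power2_eq_square sum_divide_distrib)
    then show ?thesis using diag[OF that True] gram assms(4) by simp
  qed (simp add: \<phi>_def)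
  moreover have "(\<Sum>i<Suc m. \<phi> u i * \<phi> v i) \<le> - 1 / (k - 1)" if "E u v" for u v
  proof -
    have "\<exists>w. E u w" "\<exists>w. E v w" using that simple_graphD(4)[OF assms(1) that] by blast+
    then have "\<phi> u i * \<phi> v i = g (e i) u * g (e i) v / \<mu>" if "i < m" for i
      using that sq by (simp add: \<phi>_def)
    moreover have "\<phi> u m * \<phi> v m = 0"
      using \<open>\<exists>w. E u w\<close> by (simp add: \<phi>_def)
    ultimately have "(\<Sum>i<Suc m. \<phi> u i * \<phi> v i) = (\<Sum>i<m. g (e i) u * g (e i) v) / \<mu>"
      by (simp add: sum_divide_distrib)
    also have "\<dots> \<le> (- \<mu> / (k - 1)) / \<mu>"
      unfolding gram by (rule divide_right_mono[OF edge[OF that]]) (use assms(4) in simp)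
    finally show ?thesis using assms(4) by simp
  qed
  ultimately have "vector_coloring V E k (Suc m) \<phi>"
    unfolding vector_coloring_def by (auto simp: \<phi>_def)
  then show ?thesis using assms(3) by (auto simp: vector_colorable_def)
qed

lemma vector_colorable_cat_prod_fst:
  assumes "vector_colorable V E k" shows "vector_colorable (V \<times> W) (cat_prod_adj E F) k"
proof -
  obtain d \<phi> where "vector_coloring V E k d \<phi>" "k > 1"
    using assms by (auto simp: vector_colorable_def)
  then have "vector_coloring (V \<times> W) (cat_prod_adj E F) k d (\<lambda>p. \<phi> (fst p))"
    by (auto simp: vector_coloring_def cat_prod_adj_def)
  then show ?thesis using \<open>k > 1\<close> by (auto simp: vector_colorable_def)
qed

lemma vector_colorable_cat_prod_snd:
  assumes "vector_colorable W F k" shows "vector_colorable (V \<times> W) (cat_prod_adj E F) k"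
proof -
  obtain d \<phi> where "vector_coloring W F k d \<phi>" "k > 1"
    using assms by (auto simp: vector_colorable_def)
  then have "vector_coloring (V \<times> W) (cat_prod_adj E F) k d (\<lambda>p. \<phi> (snd p))"
    by (auto simp: vector_coloring_def cat_prod_adj_def)
  then show ?thesis using \<open>k > 1\<close> by (auto simp: vector_colorable_def)
qed

section \<open>Edge-transitive graphs\<close>

definition aut_group :: "'a set \<Rightarrow> ('a \<Rightarrow> 'a \<Rightarrow> bool) \<Rightarrow> ('a \<Rightarrow> 'a) set" where
  "aut_group V E = {\<tau>. \<tau> permutes V \<and> (\<forall>u v. E (\<tau> u) (\<tau> v) \<longleftrightarrow> E u v)}"

lemma aut_groupD:
  assumes "\<tau> \<in> aut_group V E"
  shows "\<tau> permutes V" "E (\<tau> u) (\<tau> v) \<longleftrightarrow> E u v"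
  using assms by (auto simp: aut_group_def)

lemma finite_aut_group: "finite V \<Longrightarrow> finite (aut_group V E)"
  by (rule finite_subset[OF _ finite_permutations]) (auto simp: aut_group_def)

lemma id_in_aut_group: "id \<in> aut_group V E"
  by (simp add: aut_group_def)

lemma aut_group_comp: "\<tau> \<in> aut_group V E \<Longrightarrow> \<rho> \<in> aut_group V E \<Longrightarrow> \<rho> \<circ> \<tau> \<in> aut_group V E"
  by (simp add: aut_group_def permutes_compose)

lemma aut_group_inv:
  assumes "\<tau> \<in> aut_group V E" shows "inv \<tau> \<in> aut_group V E"
proof -
  have "\<tau> permutes V" by (rule aut_groupD(1)[OF assms])
  moreover have "E (inv \<tau> u) (inv \<tau> v) \<longleftrightarrow> E u v" for u v
    using aut_groupD(2)[OF assms, of "inv \<tau> u" "inv \<tau> v"] permutes_inverses(1)[OF \<open>\<tau> permutes V\<close>]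
    by simp
  ultimately show ?thesis by (simp add: aut_group_def permutes_inv)
qed

lemma sum_aut_group_comp_right:
  assumes "\<tau> \<in> aut_group V E"
  shows "(\<Sum>\<rho>\<in>aut_group V E. f (\<rho> \<circ> \<tau>)) = (\<Sum>\<rho>\<in>aut_group V E. f \<rho>)"
proof (rule sum.reindex_bij_witness[where i = "\<lambda>\<rho>. \<rho> \<circ> inv \<tau>" and j = "\<lambda>\<rho>. \<rho> \<circ> \<tau>"])
  have perm: "\<tau> permutes V" by (rule aut_groupD(1)[OF assms])
  fix \<rho> assume "\<rho> \<in> aut_group V E"
  then show "\<rho> \<circ> \<tau> \<circ> inv \<tau> = \<rho>" "\<rho> \<circ> inv \<tau> \<circ> \<tau> = \<rho>"
      "\<rho> \<circ> \<tau> \<in> aut_group V E" "\<rho> \<circ> inv \<tau> \<in> aut_group V E"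
    using permutes_inv_o[OF perm] aut_group_comp[OF assms] aut_group_comp[OF aut_group_inv[OF assms]]
    by (simp_all add: comp_assoc)
qed simp

lemma graph_automorphism_in_aut_group:
  assumes "simple_graph V E" "graph_automorphism V E \<sigma>"
  shows "(\<lambda>x. if x \<in> V then \<sigma> x else x) \<in> aut_group V E" (is "?\<tau> \<in> _")
proof -
  have bij: "bij_betw ?\<tau> V V"
    using assms(2) by (simp add: graph_automorphism_def cong: bij_betw_cong)
  then have "?\<tau> permutes V"
    by (intro bij_imp_permutes) auto
  moreover have "E (?\<tau> u) (?\<tau> v) \<longleftrightarrow> E u v" for u v
  proof (cases "u \<in> V \<and> v \<in> V")
    case True
    then show ?thesis using assms(2) by (simp add: graph_automorphism_def)
  next
    case False
    then have "?\<tau> u \<notin> V \<or> ?\<tau> v \<notin> V"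
      using bij_betwE[OF bij] \<open>?\<tau> permutes V\<close> by (metis permutes_in_image)
    then show ?thesis
      using False simple_graphD(2,3)[OF assms(1)] by metis
  qed
  ultimately show ?thesis by (simp add: aut_group_def)
qed

lemma edge_transitive_aut_group:
  assumes "simple_graph V E" "edge_transitive V E" "E u v" "E x y"
  obtains \<tau> where "\<tau> \<in> aut_group V E" "(\<tau> u = x \<and> \<tau> v = y) \<or> (\<tau> u = y \<and> \<tau> v = x)"
proof -
  obtain \<sigma> where \<sigma>: "graph_automorphism V E \<sigma>" "\<sigma> ` {u, v} = {x, y}"
    using assms(2-4) unfolding edge_transitive_def by blast
  define \<tau> where "\<tau> x = (if x \<in> V then \<sigma> x else x)" for x
  have "u \<in> V" "v \<in> V" using simple_graphD(2,3)[OF assms(1) assms(3)] by auto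
  then have "{\<tau> u, \<tau> v} = {x, y}" using \<sigma>(2) by (simp add: \<tau>_def)
  moreover have "\<tau> \<in> aut_group V E"
    using graph_automorphism_in_aut_group[OF assms(1) \<sigma>(1)] by (simp add: \<tau>_def[abs_def])
  ultimately show thesis
    using that by (auto simp: doubleton_eq_iff)
qed

lemma card_neighbours_aut_group:
  assumes "\<tau> \<in> aut_group V E"
  shows "card {v\<in>V. E (\<tau> x) v} = card {v\<in>V. E x v}"
proof -
  have perm: "\<tau> permutes V" by (rule aut_groupD(1)[OF assms])
  have "{v\<in>V. E (\<tau> x) v} = \<tau> ` {v\<in>V. E x v}"
  proof (intro set_eqI iffI)
    fix w assume "w \<in> {v\<in>V. E (\<tau> x) v}"
    then have "inv \<tau> w \<in> {v\<in>V. E x v}" "w = \<tau> (inv \<tau> w)"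
      using aut_groupD(2)[OF assms, of x "inv \<tau> w"] permutes_inverses(1)[OF perm]
        permutes_in_image[OF permutes_inv[OF perm]] by auto
    then show "w \<in> \<tau> ` {v\<in>V. E x v}" by blast
  qed (auto simp: aut_groupD(2)[OF assms] permutes_in_image[OF perm])
  then show ?thesis
    using card_image[OF permutes_inj_on[OF perm]] by simp
qed

text \<open>An automorphism maps an edge to an edge with the same pair of end degrees; if the two end
  degrees differ, the degree therefore 2-colors the graph.\<close>
lemma edge_transitive_regular_or_bipartite:
  assumes "simple_graph V E" "edge_transitive V E"
  shows "bipartite E \<or> (\<exists>d. \<forall>u\<in>V. (\<exists>v. E u v) \<longrightarrow> card {v\<in>V. E u v} = d)"
proof (cases "\<exists>u v. E u v")
  case True
  then obtain u0 v0 where e0: "E u0 v0" by blast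
  define deg where "deg x = card {v\<in>V. E x v}" for x
  have ends: "(deg x = deg u0 \<and> deg y = deg v0) \<or> (deg x = deg v0 \<and> deg y = deg u0)"
    if xy: "E x y" for x y
  proof -
    obtain \<tau> where \<tau>: "\<tau> \<in> aut_group V E" "(\<tau> u0 = x \<and> \<tau> v0 = y) \<or> (\<tau> u0 = y \<and> \<tau> v0 = x)"
      by (rule edge_transitive_aut_group[OF assms e0 xy])
    have "deg (\<tau> u0) = deg u0" "deg (\<tau> v0) = deg v0"
      using card_neighbours_aut_group[OF \<tau>(1)] by (simp_all add: deg_def)
    then show ?thesis using \<tau>(2) by auto
  qed
  show ?thesis
  proof (cases "deg u0 = deg v0")
    case True
    then have "deg u = deg u0" if "E u v" for u v
      using ends[OF that] by auto
    then show ?thesis unfolding deg_def by blast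
  next
    case False
    have "bipartite E"
      unfolding bipartite_def by (rule exI[of _ "\<lambda>x. deg x = deg u0"]) (use ends False in fastforce)
    then show ?thesis ..
  qed
qed auto

definition orbit_gram :: "('a \<Rightarrow> 'a) set \<Rightarrow> ('a \<Rightarrow> real) \<Rightarrow> 'a \<Rightarrow> 'a \<Rightarrow> real" where
  "orbit_gram \<Gamma> a u v = (\<Sum>\<rho>\<in>\<Gamma>. a (\<rho> u) * a (\<rho> v))"

lemma orbit_gram_aut_group_edge:
  assumes "simple_graph V E" "edge_transitive V E" "E u0 v0" "E x y"
  shows "orbit_gram (aut_group V E) a x y = orbit_gram (aut_group V E) a u0 v0"
proof -
  let ?M = "orbit_gram (aut_group V E) a"
  have inv: "?M (\<tau> u) (\<tau> v) = ?M u v" if "\<tau> \<in> aut_group V E" for \<tau> u v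
    using sum_aut_group_comp_right[OF that, of "\<lambda>\<rho>. a (\<rho> u) * a (\<rho> v)"]
    by (simp add: orbit_gram_def)
  have sym: "?M u v = ?M v u" for u v
    by (simp add: orbit_gram_def mult.commute)
  obtain \<tau> where "\<tau> \<in> aut_group V E" "(\<tau> u0 = x \<and> \<tau> v0 = y) \<or> (\<tau> u0 = y \<and> \<tau> v0 = x)"
    by (rule edge_transitive_aut_group[OF assms])
  then show ?thesis using inv sym by metis
qed

lemma orbit_gram_aut_group_row:
  assumes "simple_graph V E" "u \<in> V"
    and eig: "\<And>u. u \<in> V \<Longrightarrow> (\<Sum>v\<in>V. adj_matrix E u v * a v) = lam * a u"
  shows "(\<Sum>v\<in>V. adj_matrix E u v * orbit_gram (aut_group V E) a u v)
    = lam * orbit_gram (aut_group V E) a u u"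
proof -
  have row: "(\<Sum>v\<in>V. adj_matrix E u v * a (\<rho> v)) = lam * a (\<rho> u)" if "\<rho> \<in> aut_group V E" for \<rho>
  proof -
    have perm: "\<rho> permutes V" by (rule aut_groupD(1)[OF that])
    have "(\<Sum>v\<in>V. adj_matrix E u v * a (\<rho> v)) = (\<Sum>v\<in>V. adj_matrix E (\<rho> u) (\<rho> v) * a (\<rho> v))"
      by (simp add: adj_matrix_def aut_groupD(2)[OF that])
    also have "\<dots> = (\<Sum>w\<in>V. adj_matrix E (\<rho> u) w * a w)"
      by (rule sum.reindex_bij_betw[OF permutes_imp_bij[OF perm]])
    also have "\<dots> = lam * a (\<rho> u)"
      using eig permutes_in_image[OF perm] assms(2) by simp
    finally show ?thesis .
  qed
  have "(\<Sum>v\<in>V. adj_matrix E u v * orbit_gram (aut_group V E) a u v)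
      = (\<Sum>\<rho>\<in>aut_group V E. a (\<rho> u) * (\<Sum>v\<in>V. adj_matrix E u v * a (\<rho> v)))"
    unfolding orbit_gram_def by (simp add: sum_distrib_left sum.swap[of _ V] mult_ac)
  also have "\<dots> = (\<Sum>\<rho>\<in>aut_group V E. lam * (a (\<rho> u) * a (\<rho> u)))"
    by (intro sum.cong refl) (simp add: row)
  also have "\<dots> = lam * orbit_gram (aut_group V E) a u u"
    by (simp add: orbit_gram_def sum_distrib_left)
  finally show ?thesis .
qed

lemma orbit_gram_aut_group_isolated:
  assumes "u \<in> V" "\<not> (\<exists>v. E u v)" "lam \<noteq> 0"
    and eig: "\<And>u. u \<in> V \<Longrightarrow> (\<Sum>v\<in>V. adj_matrix E u v * a v) = lam * a u"
  shows "orbit_gram (aut_group V E) a u u = 0"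
proof -
  have "a (\<rho> u) = 0" if "\<rho> \<in> aut_group V E" for \<rho>
  proof -
    have "\<not> E (\<rho> u) w" for w
      using aut_groupD(2)[OF that, of u "inv \<rho> w"] permutes_inverses(1)[OF aut_groupD(1)[OF that]]
        assms(2) by auto
    then have "lam * a (\<rho> u) = 0"
      using eig[of "\<rho> u"] permutes_in_image[OF aut_groupD(1)[OF that]] assms(1)
      by (simp add: adj_matrix_def)
    then show ?thesis using assms(3) by simp
  qed
  then show ?thesis by (simp add: orbit_gram_def)
qed

lemma orbit_gram_aut_group_trace:
  assumes "sq_norm V a = 1"
  shows "(\<Sum>u\<in>V. orbit_gram (aut_group V E) a u u) = real (card (aut_group V E))"
proof -
  have "(\<Sum>u\<in>V. orbit_gram (aut_group V E) a u u) = (\<Sum>\<rho>\<in>aut_group V E. \<Sum>u\<in>V. (a (\<rho> u))\<^sup>2)"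
    unfolding orbit_gram_def power2_eq_square by (rule sum.swap)
  also have "\<dots> = (\<Sum>\<rho>\<in>aut_group V E. 1)"
    using assms sum.reindex_bij_betw[OF permutes_imp_bij[OF aut_groupD(1)], of _ V E "\<lambda>w. (a w)\<^sup>2"]
    by (intro sum.cong) (simp_all add: sq_norm_def)
  finally show ?thesis by simp
qed

lemma orbit_gram_aut_group_regular_diag:
  assumes "simple_graph V E" "edge_transitive V E" "E u0 v0"
    and reg: "\<forall>u\<in>V. (\<exists>v. E u v) \<longrightarrow> card {v\<in>V. E u v} = d"
    and "u \<in> V" "\<exists>v. E u v"
    and eig: "\<And>u. u \<in> V \<Longrightarrow> (\<Sum>v\<in>V. adj_matrix E u v * a v) = lam * a u"
  shows "lam * orbit_gram (aut_group V E) a u u = real d * orbit_gram (aut_group V E) a u0 v0"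
proof -
  let ?M = "orbit_gram (aut_group V E) a"
  have "lam * ?M u u = (\<Sum>v\<in>V. adj_matrix E u v * ?M u v)"
    using orbit_gram_aut_group_row[OF assms(1,5) eig] by simp
  also have "\<dots> = (\<Sum>v\<in>V. adj_matrix E u v * ?M u0 v0)"
    using orbit_gram_aut_group_edge[OF assms(1-3)] by (intro sum.cong refl) (simp add: adj_matrix_def)
  also have "\<dots> = real d * ?M u0 v0"
    using reg assms(5,6) simple_graphD(1)[OF assms(1)]
    by (simp add: sum_distrib_right[symmetric] sum_adj_matrix)
  finally show ?thesis .
qed

text \<open>Averaging an eigenvector \<open>a\<close> of the least eigenvalue over the automorphism group gives a
  Gram matrix which, by edge transitivity, is constant on edges, and, by regularity, constant
  on the diagonal of the non-isolated vertices; its columns form the vector coloring.\<close>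
lemma edge_transitive_vector_colorable:
  assumes "simple_graph V E" "edge_transitive V E" "E u0 v0"
    and reg: "\<forall>u\<in>V. (\<exists>v. E u v) \<longrightarrow> card {v\<in>V. E u v} = d"
    and "sq_norm V a = 1"
    and min: "\<forall>x. quad_form V (adj_matrix E) a * sq_norm V x \<le> quad_form V (adj_matrix E) x"
  shows "vector_colorable V E (1 - real d / quad_form V (adj_matrix E) a)"
proof -
  note G = simple_graphD[OF assms(1)]
  define lam where "lam = quad_form V (adj_matrix E) a"
  define \<Gamma> where "\<Gamma> = aut_group V E"
  define M where "M = orbit_gram \<Gamma> a"
  define c where "c = M u0 v0"
  have "lam < 0"
    using adj_matrix_rayleigh_lower_neg[OF assms(1,3)] min by (simp add: lam_def mult.commute)
  have "d > 0" by (rule regular_degree_pos[OF assms(1) reg assms(3)])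
  have eig: "(\<Sum>v\<in>V. adj_matrix E u v * a v) = lam * a u" if "u \<in> V" for u
    using min_rayleigh_eigenvector[OF G(1) symmetric_on_adj_matrix[OF assms(1)] assms(5) min that]
    by (simp add: lam_def)
  have edge: "M x y = c" if "E x y" for x y
    using orbit_gram_aut_group_edge[OF assms(1,2,3) that] by (simp add: M_def c_def \<Gamma>_def)
  define \<mu> where "\<mu> = real d * c / lam"
  have diag: "M u u = \<mu>" if "u \<in> V" "\<exists>v. E u v" for u
    using orbit_gram_aut_group_regular_diag[OF assms(1-4) that eig] \<open>lam < 0\<close>
    by (simp add: M_def c_def \<Gamma>_def \<mu>_def field_simps)
  have "0 < \<mu>"
  proof (rule ccontr)
    assume "\<not> 0 < \<mu>"
    then have "M u u \<le> 0" if "u \<in> V" for u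
      using diag orbit_gram_aut_group_isolated[OF that _ _ eig] \<open>lam < 0\<close> that
      by (cases "\<exists>v. E u v") (auto simp: M_def \<Gamma>_def)
    then have "(\<Sum>u\<in>V. M u u) \<le> 0" by (simp add: sum_nonpos)
    moreover have "0 < card \<Gamma>"
      using finite_aut_group[OF G(1)] id_in_aut_group by (auto simp: \<Gamma>_def card_gt_0_iff)
    ultimately show False
      using orbit_gram_aut_group_trace[OF assms(5)] by (simp add: M_def \<Gamma>_def)
  qed
  have "vector_colorable V E (1 - real d / lam)"
  proof (rule vector_colorable_of_gram[OF assms(1) finite_aut_group[OF G(1)] _ \<open>0 < \<mu>\<close>])
    show "1 < 1 - real d / lam" using \<open>lam < 0\<close> \<open>d > 0\<close> by (simp add: divide_pos_neg)
    show "(\<Sum>\<rho>\<in>aut_group V E. a (\<rho> u) * a (\<rho> u)) = \<mu>" if "u \<in> V" "\<exists>v. E u v" for u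
      using diag[OF that] by (simp add: M_def \<Gamma>_def orbit_gram_def)
    show "(\<Sum>\<rho>\<in>aut_group V E. a (\<rho> u) * a (\<rho> v)) \<le> - \<mu> / (1 - real d / lam - 1)" if "E u v" for u v
      using edge[OF that] \<open>lam < 0\<close> \<open>d > 0\<close> by (simp add: M_def \<Gamma>_def orbit_gram_def \<mu>_def field_simps)
  qed
  then show ?thesis by (simp add: lam_def)
qed

definition adj_spectral_bounds :: "'a set \<Rightarrow> ('a \<Rightarrow> 'a \<Rightarrow> bool) \<Rightarrow> real \<Rightarrow> real \<Rightarrow> bool" where
  "adj_spectral_bounds V E lam d \<longleftrightarrow> lam < 0 \<and> 0 < d \<and> rayleigh_bounds V (adj_matrix E) lam d \<and>
     (\<exists>x. (\<forall>u\<in>V. 0 \<le> x u) \<and> 0 < sq_norm V x \<and> quad_form V (adj_matrix E) x = d * sq_norm V x)"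

lemma edge_transitive_adj_spectral_bounds:
  assumes "simple_graph V E" "edge_transitive V E" "E u0 v0" "\<not> bipartite E"
  shows "\<exists>lam d. adj_spectral_bounds V E lam d \<and> vector_colorable V E (1 - d / lam)"
proof -
  note G = simple_graphD[OF assms(1)]
  obtain d where reg: "\<forall>u\<in>V. (\<exists>v. E u v) \<longrightarrow> card {v\<in>V. E u v} = d"
    using edge_transitive_regular_or_bipartite[OF assms(1,2)] assms(4) by blast
  have "V \<noteq> {}" using G(2)[OF assms(3)] by auto
  then obtain a where a: "sq_norm V a = 1"
    and min: "\<forall>x. quad_form V (adj_matrix E) a * sq_norm V x \<le> quad_form V (adj_matrix E) x"
    using exists_min_rayleigh[OF G(1)] by blast
  define lam where "lam = quad_form V (adj_matrix E) a"
  define x where "x u = (if \<exists>v. E u v then 1 else 0 :: real)" for u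
  have "lam < 0"
    using adj_matrix_rayleigh_lower_neg[OF assms(1,3)] min by (simp add: lam_def mult.commute)
  moreover have "0 < real d" using regular_degree_pos[OF assms(1) reg assms(3)] by simp
  moreover have "rayleigh_bounds V (adj_matrix E) lam d"
  proof -
    have "card {v\<in>V. E u v} \<le> real d" if "u \<in> V" for u
    proof (cases "\<exists>v. E u v")
      case False
      then have "{v\<in>V. E u v} = {}" by auto
      then show ?thesis by (simp only: card.empty of_nat_0)
    qed (use reg that in simp)
    then show ?thesis
      using quad_form_adj_matrix_le_max_degree[OF assms(1)] min
      by (simp add: rayleigh_bounds_def lam_def mult.commute)
  qed
  moreover have "0 < sq_norm V x"
  proof -
    have "(x u0)\<^sup>2 \<le> sq_norm V x"
      unfolding sq_norm_def using G(1) G(2)[OF assms(3)] by (intro member_le_sum) auto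
    moreover have "x u0 = 1" using assms(3) by (auto simp: x_def)
    ultimately show ?thesis by simp
  qed
  moreover have "quad_form V (adj_matrix E) x = d * sq_norm V x"
    using regular_quad_form_indicator[OF assms(1) reg] by (simp add: x_def[abs_def])
  moreover have "\<forall>u\<in>V. 0 \<le> x u" by (simp add: x_def)
  ultimately have "adj_spectral_bounds V E lam d"
    unfolding adj_spectral_bounds_def by blast
  moreover have "vector_colorable V E (1 - d / lam)"
    using edge_transitive_vector_colorable[OF assms(1-3) reg a min] by (simp add: lam_def)
  ultimately show ?thesis by blast
qed

lemma edge_transitive_vector_colorable_ex:
  assumes "simple_graph V E" "edge_transitive V E" "E u0 v0"
  shows "\<exists>k. vector_colorable V E k"
  using edge_transitive_adj_spectral_bounds[OF assms] bipartite_vector_colorable[of E V] by blast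

section \<open>The vector chromatic number of the product\<close>

lemma one_minus_divide_le:
  fixes d l k :: real
  assumes "l < 0" "d \<le> (k - 1) * - l"
  shows "1 - d / l \<le> k"
  using assms by (simp add: field_simps)

lemma adj_spectral_bounds_cat_prod_colorable_ge:
  assumes "simple_graph V E" "simple_graph W F"
    and G: "adj_spectral_bounds V E lG dG" and H: "adj_spectral_bounds W F lH dH"
    and "vector_colorable (V \<times> W) (cat_prod_adj E F) k"
  shows "1 - dG / lG \<le> k \<or> 1 - dH / lH \<le> k"
proof -
  have fin: "finite V" "finite W" "finite (V \<times> W)"
    using simple_graphD(1)[OF assms(1)] simple_graphD(1)[OF assms(2)] by auto
  obtain D \<psi> where col: "vector_coloring (V \<times> W) (cat_prod_adj E F) k D \<psi>" and "k > 1"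
    using assms(5) by (auto simp: vector_colorable_def)
  obtain xG xH where
    xG: "\<forall>u\<in>V. 0 \<le> xG u" "0 < sq_norm V xG" "quad_form V (adj_matrix E) xG = dG * sq_norm V xG"
    and xH: "\<forall>u\<in>W. 0 \<le> xH u" "0 < sq_norm W xH" "quad_form W (adj_matrix F) xH = dH * sq_norm W xH"
    using G H by (auto simp: adj_spectral_bounds_def)
  define m where "m = min (lH * dG) (lG * dH)"
  define X where "X p = xG (fst p) * xH (snd p)" for p
  have "\<forall>y. m * sq_norm (V \<times> W) y \<le> quad_form (V \<times> W) (adj_matrix (cat_prod_adj E F)) y"
    unfolding adj_matrix_cat_prod m_def
    using rayleigh_bounds_kron_lower[OF fin(1,2) symmetric_on_adj_matrix[OF assms(2)]] G H
    by (auto simp: adj_spectral_bounds_def less_imp_le)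
  then have "quad_form (V \<times> W) (adj_matrix (cat_prod_adj E F)) X \<le> (k - 1) * - m * sq_norm (V \<times> W) X"
    using vector_coloring_quad_form_le[OF fin(3) col \<open>k > 1\<close>] xG(1) xH(1) by (auto simp: X_def)
  moreover have "quad_form (V \<times> W) (adj_matrix (cat_prod_adj E F)) X
      = dG * dH * (sq_norm V xG * sq_norm W xH)"
    unfolding adj_matrix_cat_prod X_def quad_form_kron_tensor xG(3) xH(3) by simp
  moreover have "sq_norm (V \<times> W) X = sq_norm V xG * sq_norm W xH"
    unfolding X_def by (rule sq_norm_tensor)
  ultimately have "dG * dH * (sq_norm V xG * sq_norm W xH) \<le> ((k - 1) * - m) * (sq_norm V xG * sq_norm W xH)"
    by simp
  then have key: "dG * dH \<le> (k - 1) * - m"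
    by (rule mult_right_le_imp_le) (use xG(2) xH(2) in simp)
  show ?thesis
  proof (cases "lH * dG \<le> lG * dH")
    case True
    then have "dG * dH \<le> dG * ((k - 1) * - lH)" using key by (simp add: m_def mult_ac)
    then have "dH \<le> (k - 1) * - lH"
      by (rule mult_left_le_imp_le) (use G in \<open>simp add: adj_spectral_bounds_def\<close>)
    then show ?thesis using H one_minus_divide_le by (auto simp: adj_spectral_bounds_def)
  next
    case False
    then have "dH * dG \<le> dH * ((k - 1) * - lG)" using key by (simp add: m_def mult_ac)
    then have "dG \<le> (k - 1) * - lG"
      by (rule mult_left_le_imp_le) (use H in \<open>simp add: adj_spectral_bounds_def\<close>)
    then show ?thesis using G one_minus_divide_le by (auto simp: adj_spectral_bounds_def)
  qed
qed

lemma edge_transitive_cat_prod_colorable_dominated: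
  assumes "simple_graph V E" "simple_graph W F" "edge_transitive V E" "edge_transitive W F"
    and "E u0 v0" "F w0 z0" and col: "vector_colorable (V \<times> W) (cat_prod_adj E F) k"
  shows "\<exists>k'\<le>k. vector_colorable V E k' \<or> vector_colorable W F k'"
proof (cases "bipartite E \<or> bipartite F")
  case True
  have "cat_prod_adj E F (u0, w0) (v0, z0)" "(u0, w0) \<in> V \<times> W" "(v0, z0) \<in> V \<times> W"
    using assms(5,6) simple_graphD(2,3)[OF assms(1) assms(5)] simple_graphD(2,3)[OF assms(2) assms(6)]
    by (auto simp: cat_prod_adj_def)
  then have "2 \<le> k" using vector_colorable_ge_2[OF col] by blast
  then show ?thesis
    using True bipartite_vector_colorable[of E V] bipartite_vector_colorable[of F W] by blast
next
  case False
  obtain lG dG lH dH where G: "adj_spectral_bounds V E lG dG" "vector_colorable V E (1 - dG / lG)"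
    and H: "adj_spectral_bounds W F lH dH" "vector_colorable W F (1 - dH / lH)"
    using edge_transitive_adj_spectral_bounds[OF assms(1,3,5)]
      edge_transitive_adj_spectral_bounds[OF assms(2,4,6)] False by blast
  show ?thesis
    using adj_spectral_bounds_cat_prod_colorable_ge[OF assms(1,2) G(1) H(1) col] G(2) H(2) by blast
qed

lemma cInf_eq_min_if_dominated:
  fixes K K1 K2 :: "'a :: conditionally_complete_linorder set"
  assumes "K1 \<noteq> {}" "K2 \<noteq> {}" "K1 \<subseteq> K" "K2 \<subseteq> K" "bdd_below K"
    and dom: "\<And>k. k \<in> K \<Longrightarrow> \<exists>k'\<in>K1 \<union> K2. k' \<le> k"
  shows "Inf K = min (Inf K1) (Inf K2)"
proof (rule antisym)
  show "Inf K \<le> min (Inf K1) (Inf K2)"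
    using cInf_superset_mono[OF assms(1,5,3)] cInf_superset_mono[OF assms(2,5,4)] by simp
  have "bdd_below K1" "bdd_below K2"
    using bdd_below_mono[OF assms(5,3)] bdd_below_mono[OF assms(5,4)] by simp_all
  show "min (Inf K1) (Inf K2) \<le> Inf K"
  proof (rule cInf_greatest)
    show "K \<noteq> {}" using assms(1,3) by blast
    fix k assume "k \<in> K"
    then obtain k' where k': "k' \<in> K1 \<union> K2" "k' \<le> k" using dom by blast
    then have "min (Inf K1) (Inf K2) \<le> k'"
      using cInf_lower[OF _ \<open>bdd_below K1\<close>] cInf_lower[OF _ \<open>bdd_below K2\<close>]
      by (auto intro: min.coboundedI1 min.coboundedI2)
    then show "min (Inf K1) (Inf K2) \<le> k" using k'(2) by (rule order_trans)
  qed
qed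

lemma chi_vec_eq_Inf:
  "simple_graph V E \<Longrightarrow> E u v \<Longrightarrow> chi_vec V E = Inf {k. vector_colorable V E k}"
  by (auto simp: chi_vec_def dest: simple_graphD(2,3))

lemma chi_vec_edgeless: "\<not> (\<exists>u v. E u v) \<Longrightarrow> chi_vec V E = 1"
  by (auto simp: chi_vec_def)

lemma bdd_below_vector_colorable: "bdd_below {k. vector_colorable V E k}"
  by (rule bdd_belowI[of _ 1]) (simp add: vector_colorable_def)

lemma edge_transitive_chi_vec_ge_1:
  assumes "simple_graph V E" "edge_transitive V E"
  shows "1 \<le> chi_vec V E"
proof (cases "\<exists>u v. E u v")
  case True
  then obtain u v where "E u v" by blast
  then obtain k where "vector_colorable V E k"
    using edge_transitive_vector_colorable_ex[OF assms] by blast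
  then show ?thesis
    unfolding chi_vec_eq_Inf[OF assms(1) \<open>E u v\<close>]
    by (intro cInf_greatest) (auto simp: vector_colorable_def)
qed (simp add: chi_vec_edgeless)

lemma chi_vec_cat_prod_eq_min_if_dominated:
  assumes "simple_graph V E" "simple_graph W F" "E u0 v0" "F w0 z0"
    and "vector_colorable V E kG" "vector_colorable W F kH"
    and dom: "\<And>k. vector_colorable (V \<times> W) (cat_prod_adj E F) k
      \<Longrightarrow> \<exists>k'\<le>k. vector_colorable V E k' \<or> vector_colorable W F k'"
  shows "chi_vec (V \<times> W) (cat_prod_adj E F) = min (chi_vec V E) (chi_vec W F)"
proof -
  have "simple_graph (V \<times> W) (cat_prod_adj E F)"
    using assms(1,2) by (auto simp: simple_graph_def cat_prod_adj_def)
  moreover have "cat_prod_adj E F (u0, w0) (v0, z0)" using assms(3,4) by (simp add: cat_prod_adj_def)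
  ultimately have chi_prod: "chi_vec (V \<times> W) (cat_prod_adj E F)
      = Inf {k. vector_colorable (V \<times> W) (cat_prod_adj E F) k}"
    by (rule chi_vec_eq_Inf)
  show ?thesis
    unfolding chi_prod chi_vec_eq_Inf[OF assms(1,3)] chi_vec_eq_Inf[OF assms(2,4)]
  proof (rule cInf_eq_min_if_dominated[OF _ _ _ _ bdd_below_vector_colorable])
    show "{k. vector_colorable V E k} \<noteq> {}" "{k. vector_colorable W F k} \<noteq> {}"
      using assms(5,6) by auto
    show "{k. vector_colorable V E k} \<subseteq> {k. vector_colorable (V \<times> W) (cat_prod_adj E F) k}"
      "{k. vector_colorable W F k} \<subseteq> {k. vector_colorable (V \<times> W) (cat_prod_adj E F) k}"
      using vector_colorable_cat_prod_fst vector_colorable_cat_prod_snd by blast+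
  qed (use dom in blast)
qed

theorem corollary5p6:
  fixes V :: "'a set" and E :: "'a \<Rightarrow> 'a \<Rightarrow> bool"
    and W :: "'b set" and F :: "'b \<Rightarrow> 'b \<Rightarrow> bool"
  assumes "simple_graph V E" and "simple_graph W F"
    and "edge_transitive V E" and "edge_transitive W F"
  shows "chi_vec (V \<times> W) (cat_prod_adj E F) = min (chi_vec V E) (chi_vec W F)"
proof (cases "(\<exists>u v. E u v) \<and> (\<exists>w z. F w z)")
  case True
  then obtain u0 v0 w0 z0 where e: "E u0 v0" "F w0 z0" by blast
  obtain kG kH where "vector_colorable V E kG" "vector_colorable W F kH"
    using edge_transitive_vector_colorable_ex[OF assms(1,3) e(1)]
      edge_transitive_vector_colorable_ex[OF assms(2,4) e(2)] by blast
  then show ?thesis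
    using edge_transitive_cat_prod_colorable_dominated[OF assms e]
    by (rule chi_vec_cat_prod_eq_min_if_dominated[OF assms(1,2) e])
next
  case False
  then have "chi_vec V E = 1 \<or> chi_vec W F = 1" and "\<not> (\<exists>p q. cat_prod_adj E F p q)"
    by (auto simp: chi_vec_edgeless cat_prod_adj_def)
  then show ?thesis
    using edge_transitive_chi_vec_ge_1[OF assms(1,3)] edge_transitive_chi_vec_ge_1[OF assms(2,4)]
    by (auto simp: chi_vec_edgeless)
qed

end
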